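(* Let $n$ be an even integer, $Q=P^{\alpha_2}$, $w^{ss}_{\min}\in W^Q$ the element corresponding to $(\frac n2,n)$, and $\xi\in X(w^{ss}_{\min})^{ss}_T(\mathcal{L}(\frac n2\omega_2))$. Let $X_1,\ldots,X_d$ be the standard monomial basis of $H^0(G_{2,n},\mathcal{L}(\frac n2\omega_2))^T$, with $X_1=\prod_{i=1}^{n/2}p_{i,\frac n2+i}$. Then for every $w\in W^{P^{\alpha_{n/2}}}$ with $w\neq \mathrm{id}$ and $w\ne w_0^{S\setminus\{\alpha_{n/2}\}}$ there exists $i\neq1$ with $X_i(w\xi)\neq0$.
   Context: $G=SL(n,\mathbb{C})$, $T$ the diagonal torus, $B$ the upper triangular Borel subgroup, $W=S_n$ acting on $G/Q$ via permutation matrices. $G_{2,n}=G/Q$ is the Grassmannian of 2-planes in $\mathbb{C}^n$, $X(u)=\overline{BuQ}/Q$ for $u\in W^Q\cong I(2,n)$. $p_{a,b}$ ($a<b$) are the Plücker coordinates, sections of $\mathcal{L}(\omega_2)=\mathcal{O}(1)$, with natural $T$-linearization; $ss$ denotes $T$-semistable points. A standard monomial of degree $\frac n2$ is a product $p_{\tau_1}\cdots p_{\tau_{n/2}}$ with $\tau_1\le\cdots\le\tau_{n/2}$ in $I(2,n)$ (componentwise); the $T$-invariant ones form a basis of $H^0(G_{2,n},\mathcal{L}(\frac n2\omega_2))^T$. $W^{P^{\alpha_{n/2}}}=\{v\in S_n:v(1)<\cdots<v(\frac n2),\ v(\frac n2+1)<\cdots<v(n)\}$ and $w_0^{S\setminus\{\alpha_{n/2}\}}$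 is its longest element, $i\mapsto \frac n2+i$, $\frac n2+i\mapsto i$ ($1\le i\le\frac n2$). "$X_i(y)\ne0$" means the section $X_i$ does not vanish at the point $y$. *)

theory Defs
  imports Complex_Main "HOL-Combinatorics.Permutations"
begin

text \<open>A point of the Grassmannian G(2,n) is represented by a pair of vectors (u,v)
  in C^n (indices 1..n) spanning the 2-plane; all conditions below are invariant
  under change of basis of the plane (they only involve non-vanishing of
  homogeneous polynomials in the Pluecker coordinates).\<close>
type_synonym pt = "(nat \<Rightarrow> complex) \<times> (nat \<Rightarrow> complex)"

definition plucker :: "pt \<Rightarrow> nat \<Rightarrow> nat \<Rightarrow> complex" where
  "plucker \<xi> a b = fst \<xi> a * snd \<xi> b - fst \<xi> b * snd \<xi> a"

definition I2 :: "nat \<Rightarrow> (nat \<times> nat) set" where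
  "I2 n = {(a,b). 1 \<le> a \<and> a < b \<and> b \<le> n}"

text \<open>u, v linearly independent: some Pluecker coordinate is nonzero.\<close>
definition is_point :: "nat \<Rightarrow> pt \<Rightarrow> bool" where
  "is_point n \<xi> = (\<exists>(a,b)\<in>I2 n. plucker \<xi> a b \<noteq> 0)"

definition monom_eval :: "pt \<Rightarrow> (nat \<times> nat) list \<Rightarrow> complex" where
  "monom_eval \<xi> ms = prod_list (map (\<lambda>(a,b). plucker \<xi> a b) ms)"

text \<open>Multiplicity of e_i in the T-weight of the monomial (weight of p_{a,b} is e_a+e_b).\<close>
definition weight :: "(nat \<times> nat) list \<Rightarrow> nat \<Rightarrow> nat" where
  "weight ms i = length (filter (\<lambda>(a,b). a = i \<or> b = i) ms)"

text \<open>T-invariance (T the diagonal torus of SL(n)): the weight is a multiple of e_1+...+e_n.\<close>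
definition T_inv :: "nat \<Rightarrow> (nat \<times> nat) list \<Rightarrow> bool" where
  "T_inv n ms = (\<forall>i\<in>{1..n}. \<forall>j\<in>{1..n}. weight ms i = weight ms j)"

text \<open>T-semistable w.r.t. L(n/2 omega_2): some T-invariant section of a positive power
  L(k n/2 omega_2) (a linear combination of T-invariant degree k n/2 monomials in the
  Pluecker coordinates) does not vanish at the point.\<close>
definition semistable :: "nat \<Rightarrow> pt \<Rightarrow> bool" where
  "semistable n \<xi> = (\<exists>k>0. \<exists>S c. finite S \<and>
      (\<forall>ms\<in>S. set ms \<subseteq> I2 n \<and> length ms = k * (n div 2) \<and> T_inv n ms) \<and>
      (\<Sum>ms\<in>S. c ms * monom_eval \<xi> ms) \<noteq> 0)"

definition pair_le :: "nat \<times> nat \<Rightarrow> nat \<times> nat \<Rightarrow> bool" where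
  "pair_le p q = (fst p \<le> fst q \<and> snd p \<le> snd q)"

text \<open>Schubert variety X(u), u = (a,b) in I(2,n): vanishing of all p_tau with tau not <= u.\<close>
definition schubert :: "nat \<Rightarrow> nat \<times> nat \<Rightarrow> pt \<Rightarrow> bool" where
  "schubert n u \<xi> = (is_point n \<xi> \<and> (\<forall>\<tau>\<in>I2 n. \<not> pair_le \<tau> u \<longrightarrow> plucker \<xi> (fst \<tau>) (snd \<tau>) = 0))"

text \<open>Standard T-invariant monomials of degree n/2 (the basis X_1,...,X_d).\<close>
definition std_Tinv_monomials :: "nat \<Rightarrow> (nat \<times> nat) list set" where
  "std_Tinv_monomials n = {ms. set ms \<subseteq> I2 n \<and> length ms = n div 2 \<and>
      sorted_wrt pair_le ms \<and> T_inv n ms}"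

definition X1 :: "nat \<Rightarrow> (nat \<times> nat) list" where
  "X1 n = map (\<lambda>i. (i, n div 2 + i)) [1..<n div 2 + 1]"

text \<open>Action of a permutation w (permutation matrix e_i \<mapsto> e_{w i}) on a point.\<close>
definition perm_act :: "(nat \<Rightarrow> nat) \<Rightarrow> pt \<Rightarrow> pt" where
  "perm_act w \<xi> = (fst \<xi> \<circ> inv w, snd \<xi> \<circ> inv w)"

definition W_P_half :: "nat \<Rightarrow> (nat \<Rightarrow> nat) set" where
  "W_P_half n = {w. w permutes {1..n} \<and> strict_mono_on {1..n div 2} w
                    \<and> strict_mono_on {n div 2 + 1..n} w}"

definition w0_half :: "nat \<Rightarrow> nat \<Rightarrow> nat" where
  "w0_half n i = (if 1 \<le> i \<and> i \<le> n div 2 then n div 2 + i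
                  else if n div 2 < i \<and> i \<le> n then i - n div 2 else i)"

end

theory Submission
  imports Defs
begin

text \<open>Write m = n/2. On the Schubert variety X(m, n) a Pluecker coordinate p_{a,b} can be
  nonzero only if a \<le> m. Take a T-invariant monomial not vanishing at \<xi>: each factor
  p_{a,b} has a in the lower half, and since T-invariance gives both halves the same total
  weight, b lies in the upper half. Choosing factors p_{i,b} and p_{a,m+i}, the Pluecker
  relation p_{i,b} p_{a,m+i} = p_{i,a} p_{b,m+i} + p_{i,m+i} p_{a,b}, in which p_{b,m+i}
  vanishes on X(m, n), shows p_{i,m+i}(\<xi>) \<noteq> 0 for every i \<le> m.
  Hence the monomial with factors p_{w i, w (m+i)} does not vanish at w\<xi>. It is T-invariant,
  standard because w increases on both halves, and equal to X_1 only for w = id or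
  w = w_0.\<close>

lemma plucker_swap: "plucker \<xi> b a = - plucker \<xi> a b"
  by (simp add: plucker_def)

lemma plucker_diag: "plucker \<xi> a a = 0"
  by (simp add: plucker_def)

lemma plucker_three_term_relation:
  "plucker \<xi> i b * plucker \<xi> a d = plucker \<xi> i a * plucker \<xi> b d + plucker \<xi> i d * plucker \<xi> a b"
  by (simp add: plucker_def algebra_simps)

lemma plucker_perm_act: "plucker (perm_act w \<xi>) a b = plucker \<xi> (inv w a) (inv w b)"
  by (simp add: plucker_def perm_act_def)

lemma monom_eval_eq_0_iff:
  "monom_eval \<xi> ms = 0 \<longleftrightarrow> (\<exists>(a,b)\<in>set ms. plucker \<xi> a b = 0)"
  by (force simp: monom_eval_def prod_list_zero_iff)

lemma weight_Cons: "weight (p # ms) j = (if fst p = j \<or> snd p = j then 1 else 0) + weight ms j"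
  by (cases p) (simp add: weight_def)

lemma weight_pos_iff: "0 < weight ms j \<longleftrightarrow> (\<exists>(a,b)\<in>set ms. a = j \<or> b = j)"
  by (simp add: weight_def filter_empty_conv)

lemma sum_weight_eq_sum_list_card:
  assumes "finite A"
  shows "(\<Sum>j\<in>A. weight ms j) = (\<Sum>p\<leftarrow>ms. card ({fst p, snd p} \<inter> A))"
proof (induction ms)
  case Nil
  then show ?case by (simp add: weight_def)
next
  case (Cons p ms)
  have "(\<Sum>j\<in>A. if fst p = j \<or> snd p = j then 1 else 0) = (\<Sum>j\<in>A \<inter> {fst p, snd p}. 1::nat)"
    unfolding sum.inter_restrict[OF assms] by (intro sum.cong) auto
  then have "(\<Sum>j\<in>A. if fst p = j \<or> snd p = j then 1 else 0) = card ({fst p, snd p} \<inter> A)"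
    by (simp add: Int_commute)
  then show ?case
    using Cons.IH by (simp add: weight_Cons sum.distrib)
qed

lemma card_pair_inter_halves:
  fixes a b m :: nat
  assumes "1 \<le> a" "a \<le> m" "a < b" "b \<le> 2 * m"
  shows "card ({a, b} \<inter> {1..m}) = card ({a, b} \<inter> {m<..2 * m}) + (if b \<le> m then 2 else 0)"
proof (cases "b \<le> m")
  case True
  then have "{a, b} \<inter> {1..m} = {a, b}" "{a, b} \<inter> {m<..2 * m} = {}"
    using assms by auto
  then show ?thesis using True assms by simp
next
  case False
  then have "{a, b} \<inter> {1..m} = {a}" "{a, b} \<inter> {m<..2 * m} = {b}"
    using assms by auto
  then show ?thesis using False by simp
qed

lemma T_inv_pairs_straddle_middle:
  assumes T: "T_inv (2 * m) ms"
    and pairs: "\<forall>(a,b)\<in>set ms. 1 \<le> a \<and> a \<le> m \<and> a < b \<and> b \<le> 2 * m"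
    and ab: "(a,b) \<in> set ms"
  shows "m < b"
proof -
  \<comment> \<open>Each pair meets the lower half once, or twice when b \<le> m; T-invariance gives the
      two halves equal total weight.\<close>
  obtain t where const: "\<And>j. j \<in> {1..2 * m} \<Longrightarrow> weight ms j = t"
    using T unfolding T_inv_def by blast
  have pointwise: "card ({fst p, snd p} \<inter> {1..m})
      = card ({fst p, snd p} \<inter> {m<..2 * m}) + (if snd p \<le> m then 2 else 0)"
    if "p \<in> set ms" for p
    using pairs that by (intro card_pair_inter_halves) auto
  have "(\<Sum>p\<leftarrow>ms. card ({fst p, snd p} \<inter> {m<..2 * m})) + (\<Sum>p\<leftarrow>ms. if snd p \<le> m then 2 else 0)
      = (\<Sum>p\<leftarrow>ms. card ({fst p, snd p} \<inter> {1..m}))"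
    unfolding sum_list_addf[symmetric] using pointwise by (intro arg_cong[where f = sum_list] map_cong) auto
  also have "\<dots> = (\<Sum>j\<in>{1..m}. weight ms j)"
    by (simp add: sum_weight_eq_sum_list_card)
  also have "\<dots> = m * t"
    using const by simp
  also have "\<dots> = (\<Sum>j\<in>{m<..2 * m}. weight ms j)"
    using const by simp
  also have "\<dots> = (\<Sum>p\<leftarrow>ms. card ({fst p, snd p} \<inter> {m<..2 * m}))"
    by (simp add: sum_weight_eq_sum_list_card)
  finally have "(\<Sum>p\<leftarrow>ms. if snd p \<le> m then 2 else 0 :: nat) = 0"
    by simp
  then have "\<forall>x\<in>set (map (\<lambda>p. if snd p \<le> m then 2 else 0 :: nat) ms). x = 0"
    by (simp only: sum_list_eq_0_iff)
  moreover have "(if b \<le> m then 2 else 0 :: nat) \<in> set (map (\<lambda>p. if snd p \<le> m then 2 else 0) ms)"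
    unfolding set_map by (rule rev_image_eqI[OF ab]) simp
  ultimately have "(if b \<le> m then 2 else 0 :: nat) = 0"
    by (rule bspec)
  then show ?thesis
    by (simp split: if_splits)
qed

lemma schubert_plucker_nonzero_imp_le:
  assumes "schubert n u \<xi>" "(a,b) \<in> I2 n" "plucker \<xi> a b \<noteq> 0"
  shows "pair_le (a,b) u"
  using assms unfolding schubert_def by fastforce

lemma schubert_plucker_above_eq_0:
  assumes "schubert n (m, n) \<xi>" "m < b" "m < d" "b \<le> n" "d \<le> n"
  shows "plucker \<xi> b d = 0"
proof (cases b d rule: linorder_cases)
  case less
  then show ?thesis
    using assms schubert_plucker_nonzero_imp_le[of n "(m, n)" \<xi> b d] by (auto simp: I2_def pair_le_def)
next
  case equal
  then show ?thesis by (simp add: plucker_diag)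
next
  case greater
  then have "plucker \<xi> d b = 0"
    using assms schubert_plucker_nonzero_imp_le[of n "(m, n)" \<xi> d b] by (auto simp: I2_def pair_le_def)
  then show ?thesis by (simp add: plucker_swap[of \<xi> b d])
qed

lemma semistable_nonvanishing_T_inv_monomial:
  assumes "semistable n \<xi>" "2 \<le> n"
  obtains ms where "ms \<noteq> []" "set ms \<subseteq> I2 n" "T_inv n ms" "monom_eval \<xi> ms \<noteq> 0"
proof -
  obtain k S c where "k > 0" "finite S"
    and S: "\<forall>ms\<in>S. set ms \<subseteq> I2 n \<and> length ms = k * (n div 2) \<and> T_inv n ms"
    and "(\<Sum>ms\<in>S. c ms * monom_eval \<xi> ms) \<noteq> 0"
    using assms(1) unfolding semistable_def by blast
  then obtain ms where "ms \<in> S" "monom_eval \<xi> ms \<noteq> 0"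
    by (metis (no_types, lifting) mult_zero_right sum.neutral)
  moreover have "length ms > 0"
    using S \<open>ms \<in> S\<close> \<open>k > 0\<close> assms(2) by auto
  ultimately show ?thesis
    using S that by blast
qed

lemma T_inv_index_occurs:
  assumes "ms \<noteq> []" "set ms \<subseteq> I2 n" "T_inv n ms" "j \<in> {1..n}"
  shows "\<exists>(a,b)\<in>set ms. a = j \<or> b = j"
proof -
  obtain a b where ab: "(a,b) \<in> set ms"
    using assms(1) by (metis list.set_sel(1) surj_pair)
  then have "a \<in> {1..n}" "0 < weight ms a"
    using assms(2) by (auto simp: I2_def weight_pos_iff)
  then have "0 < weight ms j"
    using assms(3,4) unfolding T_inv_def by metis
  then show ?thesis
    by (simp add: weight_pos_iff)
qed

lemma semistable_schubert_plucker_diagonal_nonzero: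
  assumes X: "schubert (2 * m) (m, 2 * m) \<xi>" and ss: "semistable (2 * m) \<xi>"
    and i: "1 \<le> i" "i \<le> m"
  shows "plucker \<xi> i (m + i) \<noteq> 0"
proof -
  obtain ms where ms: "ms \<noteq> []" "set ms \<subseteq> I2 (2 * m)" "T_inv (2 * m) ms" "monom_eval \<xi> ms \<noteq> 0"
    using semistable_nonvanishing_T_inv_monomial[OF ss] i by auto
  have factor_nonzero: "plucker \<xi> a b \<noteq> 0" if "(a,b) \<in> set ms" for a b
    using ms(4) that by (auto simp: monom_eval_eq_0_iff)
  have bounds: "1 \<le> a \<and> a \<le> m \<and> a < b \<and> b \<le> 2 * m" if ab: "(a,b) \<in> set ms" for a b
  proof -
    have "(a,b) \<in> I2 (2 * m)"
      using ms(2) ab by blast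
    moreover have "pair_le (a,b) (m, 2 * m)"
      using schubert_plucker_nonzero_imp_le[OF X calculation factor_nonzero[OF ab]] .
    ultimately show ?thesis
      by (simp add: I2_def pair_le_def)
  qed
  have upper: "m < b" if "(a,b) \<in> set ms" for a b
    using T_inv_pairs_straddle_middle[OF ms(3) _ that] bounds by blast
  obtain b where ib: "(i, b) \<in> set ms"
  proof -
    obtain a' b where "(a',b) \<in> set ms" "a' = i \<or> b = i"
      using T_inv_index_occurs[OF ms(1-3), of i] i by auto
    with upper i that show thesis by force
  qed
  obtain a where ai: "(a, m + i) \<in> set ms"
  proof -
    obtain a b' where "(a,b') \<in> set ms" "a = m + i \<or> b' = m + i"
      using T_inv_index_occurs[OF ms(1-3), of "m + i"] i by auto
    with bounds i that show thesis by force
  qed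
  have "plucker \<xi> b (m + i) = 0"
    using schubert_plucker_above_eq_0[OF X upper[OF ib]] bounds[OF ib] i by simp
  moreover have "plucker \<xi> i b * plucker \<xi> a (m + i) \<noteq> 0"
    using factor_nonzero ib ai by simp
  ultimately show ?thesis
    using plucker_three_term_relation[of \<xi> i b a "m + i"] by auto
qed

text \<open>The translate of X_1 by w, up to sign.\<close>

definition perm_monomial :: "nat \<Rightarrow> (nat \<Rightarrow> nat) \<Rightarrow> (nat \<times> nat) list" where
  "perm_monomial m w = map (\<lambda>i. (min (w i) (w (m + i)), max (w i) (w (m + i)))) [1..<m + 1]"

lemma X1_eq_perm_monomial_id: "X1 (2 * m) = perm_monomial m id"
  by (simp add: X1_def perm_monomial_def)

lemma set_perm_monomial_subset_I2:
  assumes w: "w permutes {1..2 * m}"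
  shows "set (perm_monomial m w) \<subseteq> I2 (2 * m)"
proof
  fix p assume "p \<in> set (perm_monomial m w)"
  then obtain i where "i \<in> set [1..<m + 1]" and p: "p = (min (w i) (w (m + i)), max (w i) (w (m + i)))"
    unfolding perm_monomial_def set_map by blast
  then have i: "i \<in> {1..m}"
    by auto
  have "w i \<in> {1..2 * m}" "w (m + i) \<in> {1..2 * m}"
    using i permutes_in_image[OF w] by auto
  moreover have "w i \<noteq> w (m + i)"
    using i inj_eq[OF permutes_inj[OF w]] by simp
  ultimately show "p \<in> I2 (2 * m)"
    unfolding p I2_def by (simp add: min_def max_def)
qed

lemma sorted_perm_monomial:
  assumes "strict_mono_on {1..m} w" "strict_mono_on {m + 1..2 * m} w"
  shows "sorted_wrt pair_le (perm_monomial m w)"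
  unfolding perm_monomial_def sorted_wrt_map
proof (rule sorted_wrt_mono_rel[OF _ sorted_wrt_upt])
  fix i j assume "i \<in> set [1..<m + 1]" "j \<in> set [1..<m + 1]" "i < j"
  then have "w i < w j" "w (m + i) < w (m + j)"
    using strict_mono_onD[OF assms(1), of i j] strict_mono_onD[OF assms(2), of "m + i" "m + j"] by auto
  then show "pair_le (min (w i) (w (m + i)), max (w i) (w (m + i))) (min (w j) (w (m + j)), max (w j) (w (m + j)))"
    by (auto simp: pair_le_def)
qed

lemma weight_perm_monomial:
  assumes w: "w permutes {1..2 * m}" and j: "j \<in> {1..2 * m}"
  shows "weight (perm_monomial m w) j = 1"
proof -
  define k where "k = inv w j"
  have wk: "w k = j" and k: "k \<in> {1..2 * m}"
    unfolding k_def using permutes_inverses(1)[OF w] permutes_in_image[OF permutes_inv[OF w]] j by auto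
  have w_eq_j: "w x = j \<longleftrightarrow> x = k" for x
    using permutes_inj[OF w] wk by (auto dest: injD)
  have "{i. w i = j \<or> w (m + i) = j} \<inter> {1..m} = {i. i = k \<or> m + i = k} \<inter> {1..m}"
    by (simp only: w_eq_j)
  also have "\<dots> = {if k \<le> m then k else k - m}"
  proof (cases "k \<le> m")
    case True
    then show ?thesis using k by auto
  next
    case False
    then show ?thesis using k by auto
  qed
  finally have solutions: "{i. w i = j \<or> w (m + i) = j} \<inter> {1..m} = {if k \<le> m then k else k - m}" .
  have "weight (perm_monomial m w) j = length (filter (\<lambda>i. w i = j \<or> w (m + i) = j) [1..<m + 1])"
    unfolding weight_def perm_monomial_def filter_map length_map
    by (intro arg_cong[where f = length] filter_cong) (auto simp: min_def max_def)
  also have "\<dots> = card ({i. w i = j \<or> w (m + i) = j} \<inter> {1..m})"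
  proof -
    have "set [1..<m + 1] = {1..m}" by auto
    with distinct_length_filter[OF distinct_upt, of "\<lambda>i. w i = j \<or> w (m + i) = j" 1 "m + 1"]
    show ?thesis by (simp only:)
  qed
  finally show ?thesis
    unfolding solutions by simp
qed

lemma perm_monomial_in_std_Tinv_monomials:
  assumes "w \<in> W_P_half (2 * m)"
  shows "perm_monomial m w \<in> std_Tinv_monomials (2 * m)"
proof -
  have "length (perm_monomial m w) = m"
    by (simp add: perm_monomial_def)
  then show ?thesis
    using assms set_perm_monomial_subset_I2 sorted_perm_monomial weight_perm_monomial
    by (simp add: W_P_half_def std_Tinv_monomials_def T_inv_def)
qed

lemma plucker_perm_act_min_max_eq_0_iff:
  assumes "inj w"
  shows "plucker (perm_act w \<xi>) (min (w a) (w b)) (max (w a) (w b)) = 0 \<longleftrightarrow> plucker \<xi> a b = 0"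
  using assms by (cases "w a \<le> w b") (auto simp: plucker_perm_act min_def max_def plucker_swap[of \<xi> b a])

lemma monom_eval_perm_act_perm_monomial_nonzero:
  assumes "inj w" "\<And>i. i \<in> {1..m} \<Longrightarrow> plucker \<xi> i (m + i) \<noteq> 0"
  shows "monom_eval (perm_act w \<xi>) (perm_monomial m w) \<noteq> 0"
  using assms by (auto simp: monom_eval_eq_0_iff perm_monomial_def plucker_perm_act_min_max_eq_0_iff
      simp del: upt_Suc)

lemma perm_monomial_eq_id_imp_fix_or_swap:
  assumes "perm_monomial m w = perm_monomial m id" "i \<in> {1..m}"
  shows "(w i = i \<and> w (m + i) = m + i) \<or> (w i = m + i \<and> w (m + i) = i)"
proof -
  have "i \<in> set [1..<m + 1]"
    using assms(2) by auto
  then have "(min (w i) (w (m + i)), max (w i) (w (m + i))) = (i, m + i)"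
    using assms(1) unfolding perm_monomial_def map_eq_conv by auto
  then show ?thesis
    by (auto simp: min_def max_def split: if_splits)
qed

lemma permutes_eq_if_eq_on_halves:
  fixes w v :: "nat \<Rightarrow> nat"
  assumes "w permutes {1..2 * m}" "\<And>x. x \<notin> {1..2 * m} \<Longrightarrow> v x = x"
    and "\<And>i. i \<in> {1..m} \<Longrightarrow> w i = v i \<and> w (m + i) = v (m + i)"
  shows "w = v"
proof
  fix x
  show "w x = v x"
  proof (cases "x \<in> {1..2 * m}")
    case False
    then show ?thesis
      using permutes_not_in[OF assms(1)] assms(2) by simp
  next
    case True
    show ?thesis
    proof (cases "x \<le> m")
      case True
      then show ?thesis
        using \<open>x \<in> {1..2 * m}\<close> assms(3)[of x] by simp
    next
      case False
      then have "x - m \<in> {1..m}" "m + (x - m) = x"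
        using \<open>x \<in> {1..2 * m}\<close> by auto
      then show ?thesis
        using assms(3)[of "x - m"] by simp
    qed
  qed
qed

lemma W_P_half_fix_or_swap_cases:
  assumes w: "w \<in> W_P_half (2 * m)"
    and fix_or_swap: "\<And>i. i \<in> {1..m} \<Longrightarrow> (w i = i \<and> w (m + i) = m + i) \<or> (w i = m + i \<and> w (m + i) = i)"
  shows "w = id \<or> w = w0_half (2 * m)"
proof -
  have perm: "w permutes {1..2 * m}" and low: "strict_mono_on {1..m} w" and high: "strict_mono_on {m + 1..2 * m} w"
    using w by (auto simp: W_P_half_def)
  show ?thesis
  proof (cases "\<exists>i0\<in>{1..m}. w i0 = m + i0")
    case True
    then obtain i0 where i0: "i0 \<in> {1..m}" "w i0 = m + i0"
      by blast
    have "w i = m + i \<and> w (m + i) = i" if i: "i \<in> {1..m}" for i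
    proof (cases i i0 rule: linorder_cases)
      case less
      then have "w (m + i) < w (m + i0)"
        using strict_mono_onD[OF high] i i0 by auto
      moreover have "w (m + i0) = i0"
        using fix_or_swap[OF i0(1)] i0 by auto
      ultimately show ?thesis
        using fix_or_swap[OF i] i0 by auto
    next
      case equal
      then show ?thesis
        using fix_or_swap[OF i] i0 by auto
    next
      case greater
      then have "w i0 < w i"
        using strict_mono_onD[OF low, of i0 i] i i0 by auto
      then show ?thesis
        using fix_or_swap[OF i] i i0 by auto
    qed
    then have "w = w0_half (2 * m)"
      by (intro permutes_eq_if_eq_on_halves[OF perm]) (auto simp: w0_half_def)
    then show ?thesis ..
  next
    case False
    then have "w i = i \<and> w (m + i) = m + i" if "i \<in> {1..m}" for i
      using fix_or_swap[OF that] that by auto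
    then have "w = id"
      by (intro permutes_eq_if_eq_on_halves[OF perm]) auto
    then show ?thesis ..
  qed
qed

theorem lemma7p8:
  fixes n :: nat and \<xi> :: pt and w :: "nat \<Rightarrow> nat"
  assumes "even n"
    and "schubert n (n div 2, n) \<xi>"
    and "semistable n \<xi>"
    and "w \<in> W_P_half n"
    and "w \<noteq> id"
    and "w \<noteq> w0_half n"
  shows "\<exists>X\<in>std_Tinv_monomials n. X \<noteq> X1 n \<and> monom_eval (perm_act w \<xi>) X \<noteq> 0"
proof -
  obtain m where n: "n = 2 * m"
    using assms(1) by (elim evenE)
  have X: "schubert (2 * m) (m, 2 * m) \<xi>" and ss: "semistable (2 * m) \<xi>" and w: "w \<in> W_P_half (2 * m)"
    using assms(2-4) by (simp_all add: n)
  have "perm_monomial m w \<noteq> X1 n"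
  proof
    assume "perm_monomial m w = X1 n"
    then have "w = id \<or> w = w0_half (2 * m)"
      using W_P_half_fix_or_swap_cases[OF w perm_monomial_eq_id_imp_fix_or_swap]
      by (simp add: n X1_eq_perm_monomial_id)
    then show False
      using assms(5,6) n by blast
  qed
  moreover have "monom_eval (perm_act w \<xi>) (perm_monomial m w) \<noteq> 0"
    using w semistable_schubert_plucker_diagonal_nonzero[OF X ss]
    by (intro monom_eval_perm_act_perm_monomial_nonzero) (auto simp: W_P_half_def permutes_inj)
  ultimately show ?thesis
    using perm_monomial_in_std_Tinv_monomials[OF w] n by auto
qed

end
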